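(* Let the setting of the context hold and suppose $\gamma$ is bounded. Then there exists a constant $b_1>0$ such that \[ P\Big[\max_{1\leq k\leq d_n}|\widehat{\mathcal{E}}_{(k)} - \mathcal{E}_{(k)}|> n^{-\alpha}\Big]\leq O\big( e^{-b_1 \{n^{1-2\alpha}-n^\beta\}}\big)\quad\text{for all } 0<\alpha<(1-\beta)/2, \] where $\mathcal{E}_{(1)}\le\dots\le\mathcal{E}_{(d_n)}$ and $\widehat{\mathcal{E}}_{(1)}\le\dots\le\widehat{\mathcal{E}}_{(d_n)}$ are the ordered values of $\mathcal{E}_1,\dots,\mathcal{E}_{d_n}$ and $\widehat{\mathcal{E}}_1,\dots,\widehat{\mathcal{E}}_{d_n}$.
   Context: For each $n$, let $\mathbf{F},\mathbf{G}$ be absolutely continuous distribution functions on $\mathbb{R}^{d_n}$. Training data: $\mathbf{X}_1,\dots,\mathbf{X}_{n_1}$ iid $\mathbf{F}$, $\mathbf{Y}_1,\dots,\mathbf{Y}_{n_2}$ iid $\mathbf{G}$, independent, $n=n_1+n_2$, $\min\{n_1,n_2\}\ge2$, $n_1/n\to\pi_1\in(0,1)$; $\log d_n=O(n^\beta)$ for fixed $0\le\beta<1$. $\gamma:[0,\infty)\to[0,\infty)$ is continuous, increasing, $\gamma(0)=0$, with non-constant completely monotone derivative. $\mathcal{E}_k=2E\gamma(|X_{1k}-Y_{1k}|^2)-E\gamma(|X_{1k}-X_{2k}|^2)-E\gamma(|Y_{1k}-Y_{2k}|^2)$ and $\widehat{\mathcal{E}}_k=\frac{2}{n_1n_2}\sum_{m_1,m_2}\gamma(|X_{m_1k}-Y_{m_2k}|^2)-\binom{n_1}{2}^{-1}\sum_{m_1<m_2}\gamma(|X_{m_1k}-X_{m_2k}|^2)-\binom{n_2}{2}^{-1}\sum_{m_1<m_2}\gamma(|Y_{m_1k}-Y_{m_2k}|^2)$.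 *)

theory Defs
  imports "HOL-Probability.Probability" "HOL-Library.Landau_Symbols"
begin

definition completely_monotone_on_pos :: "(real \<Rightarrow> real) \<Rightarrow> bool" where
  "completely_monotone_on_pos f \<longleftrightarrow>
     (\<forall>k::nat. \<forall>t>0. ((deriv ^^ k) f) differentiable (at t)) \<and>
     (\<forall>k::nat. \<forall>t>0. (-1) ^ k * (deriv ^^ k) f t \<ge> 0)"

text \<open>Population energy distance of the k-th coordinate (coordinates indexed from 0).\<close>
definition energy_coord ::
  "(real \<Rightarrow> real) \<Rightarrow> (nat \<Rightarrow> real) measure \<Rightarrow> (nat \<Rightarrow> real) measure \<Rightarrow> nat \<Rightarrow> real" where
  "energy_coord \<gamma> F G k =
     2 * (\<integral>x. (\<integral>y. \<gamma> (\<bar>x k - y k\<bar>^2) \<partial>G) \<partial>F)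
     - (\<integral>x. (\<integral>x'. \<gamma> (\<bar>x k - x' k\<bar>^2) \<partial>F) \<partial>F)
     - (\<integral>y. (\<integral>y'. \<gamma> (\<bar>y k - y' k\<bar>^2) \<partial>G) \<partial>G)"

definition energy_hat_coord ::
  "(real \<Rightarrow> real) \<Rightarrow> nat \<Rightarrow> nat \<Rightarrow> (nat \<Rightarrow> nat \<Rightarrow> real) \<Rightarrow> (nat \<Rightarrow> nat \<Rightarrow> real) \<Rightarrow> nat \<Rightarrow> real" where
  "energy_hat_coord \<gamma> n1 n2 X Y k =
     2 / (real n1 * real n2) * (\<Sum>i<n1. \<Sum>j<n2. \<gamma> (\<bar>X i k - Y j k\<bar>^2))
     - (\<Sum>i<n1. \<Sum>j\<in>{i<..<n1}. \<gamma> (\<bar>X i k - X j k\<bar>^2)) / real (n1 choose 2)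
     - (\<Sum>i<n2. \<Sum>j\<in>{i<..<n2}. \<gamma> (\<bar>Y i k - Y j k\<bar>^2)) / real (n2 choose 2)"

text \<open>Order statistic: ordstat f d k is the (k+1)-th smallest among f 0, ..., f (d-1).\<close>
definition ordstat :: "(nat \<Rightarrow> real) \<Rightarrow> nat \<Rightarrow> nat \<Rightarrow> real" where
  "ordstat f d k = sort (map f [0..<d]) ! k"

end

theory Submission
  imports Defs "HOL-Real_Asymp.Real_Asymp"
begin

(* Each coordinate estimator is 2 U_XY - U_XX - U_YY, a combination of U-statistics whose
   kernel gamma(|x_k - y_k|^2) is bounded. Colouring the index pairs (i, j) of a U-statistic by
   (i + j) mod N, as in a round-robin tournament, splits them into N matchings of size at least
   about N/2. The summands along one matching are independent, so Hoeffding's inequality and a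
   union bound over the colours give P(|U - E U| > s) <= 2 N exp(-c N s^2). Sorting is 1-Lipschitz
   for the sup-norm, hence the ordered estimates deviate by at most the largest coordinatewise
   deviation, and the union bound over the d_n = exp(O(n^beta)) coordinates is absorbed by the
   exponent n^(1 - 2 alpha). *)

section \<open>Hoeffding's inequality for sums over matchings\<close>

lemma indep_vars_PiM_components:
  assumes I: "finite I" "I \<noteq> {}" and M: "\<And>i. i \<in> I \<Longrightarrow> prob_space (M i)"
  shows "prob_space.indep_vars (PiM I M) M (\<lambda>i x. x i) I"
proof -
  interpret prob_space "PiM I M" by (rule prob_space_PiM) (rule M)
  have "distr (PiM I M) (PiM I M) (\<lambda>x. \<lambda>i\<in>I. x i) = distr (PiM I M) (PiM I M) (\<lambda>x. x)"
    by (rule distr_cong) (auto simp: space_PiM)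
  also have "\<dots> = PiM I (\<lambda>i. distr (PiM I M) (M i) (\<lambda>x. x i))"
    by (simp add: distr_PiM_component M cong: PiM_cong)
  finally show ?thesis
    by (subst indep_vars_iff_distr_eq_PiM') (auto simp: I)
qed

lemma distr_PiM_pair_components:
  assumes I: "finite I" and M: "\<And>i. i \<in> I \<Longrightarrow> prob_space (M i)"
    and ab: "a \<in> I" "b \<in> I" "a \<noteq> b"
  shows "distr (PiM I M) (M a \<Otimes>\<^sub>M M b) (\<lambda>x. (x a, x b)) = M a \<Otimes>\<^sub>M M b"
proof -
  interpret prob_space "PiM I M" by (rule prob_space_PiM) (rule M)
  have "indep_vars M (\<lambda>i x. x i) I"
    using indep_vars_PiM_components[of I M] I M ab by blast
  then have "indep_var (PiM {a} M) (\<lambda>x. restrict x {a}) (PiM {b} M) (\<lambda>x. restrict x {b})"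
    by (rule indep_var_restrict) (use ab in auto)
  then have "indep_var (M a) ((\<lambda>z. z a) \<circ> (\<lambda>x. restrict x {a}))
      (M b) ((\<lambda>z. z b) \<circ> (\<lambda>x. restrict x {b}))"
    by (rule indep_var_compose) auto
  then have "indep_var (M a) (\<lambda>x. x a) (M b) (\<lambda>x. x b)"
    by (simp add: comp_def)
  then show ?thesis
    using ab by (simp add: indep_var_distribution_eq distr_PiM_component M)
qed

lemma measurable_PiM_pair_components:
  assumes "\<And>i. i \<in> I \<Longrightarrow> sets (M i) = sets D"
    and "f \<in> borel_measurable (D \<Otimes>\<^sub>M D)" and "a \<in> I" "b \<in> I"
  shows "(\<lambda>x. f (x a, x b)) \<in> borel_measurable (PiM I M)"
proof -
  have component: "(\<lambda>x. x i) \<in> measurable (PiM I M) D" if "i \<in> I" for i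
    using measurable_cong_sets[OF refl assms(1)] that by (metis measurable_component_singleton)
  show ?thesis
    using measurable_compose[OF measurable_Pair[OF component component] assms(2)] assms(3,4)
    by simp
qed

lemma integral_PiM_pair_components:
  fixes f :: "'a \<times> 'a \<Rightarrow> real"
  assumes I: "finite I" and M: "\<And>i. i \<in> I \<Longrightarrow> prob_space (M i)"
    and sets_M: "\<And>i. i \<in> I \<Longrightarrow> sets (M i) = sets D"
    and f: "f \<in> borel_measurable (D \<Otimes>\<^sub>M D)" and f_bound: "\<And>z. \<bar>f z\<bar> \<le> B"
    and ab: "a \<in> I" "b \<in> I" "a \<noteq> b"
  shows "(\<integral>x. f (x a, x b) \<partial>PiM I M) = (\<integral>x. (\<integral>y. f (x, y) \<partial>M b) \<partial>M a)"
proof -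
  interpret Ma: prob_space "M a" using M ab by auto
  interpret Mb: prob_space "M b" using M ab by auto
  interpret pair_prob_space "M a" "M b" by standard
  have "sets (M a \<Otimes>\<^sub>M M b) = sets (D \<Otimes>\<^sub>M D)"
    using sets_M ab by (intro sets_pair_measure_cong) auto
  then have f': "f \<in> borel_measurable (M a \<Otimes>\<^sub>M M b)"
    using f measurable_cong_sets by blast
  have "(\<integral>x. f (x a, x b) \<partial>PiM I M) = integral\<^sup>L (distr (PiM I M) (M a \<Otimes>\<^sub>M M b) (\<lambda>x. (x a, x b))) f"
    using ab f' by (intro integral_distr[symmetric]) auto
  also have "\<dots> = integral\<^sup>L (M a \<Otimes>\<^sub>M M b) f"
    by (simp add: distr_PiM_pair_components I M ab)
  also have "\<dots> = (\<integral>x. (\<integral>y. f (x, y) \<partial>M b) \<partial>M a)"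
    using f' f_bound by (intro integral_fst'[symmetric] P.integrable_const_bound[where B=B]) auto
  finally show ?thesis .
qed

definition pair_matching :: "('i \<times> 'i) set \<Rightarrow> bool" where
  "pair_matching L \<longleftrightarrow> (\<forall>p\<in>L. fst p \<noteq> snd p) \<and> disjoint_family_on (\<lambda>p. {fst p, snd p}) L"

lemma pair_matchingI:
  assumes "\<And>p. p \<in> L \<Longrightarrow> fst p \<noteq> snd p"
    and "\<And>a b a' b'. (a, b) \<in> L \<Longrightarrow> (a', b') \<in> L \<Longrightarrow> (a, b) \<noteq> (a', b') \<Longrightarrow>
      a \<noteq> a' \<and> b \<noteq> b' \<and> a \<noteq> b' \<and> b \<noteq> a'"
  shows "pair_matching L"
  using assms unfolding pair_matching_def disjoint_family_on_def by fastforce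

lemma pair_matching_image:
  assumes "pair_matching L" "inj h"
  shows "pair_matching (map_prod h h ` L)"
  using assms unfolding pair_matching_def disjoint_family_on_def
  by (auto simp: inj_eq)

lemma Hoeffding_PiM_matching:
  fixes M :: "'i \<Rightarrow> 'a measure" and f :: "'a \<times> 'a \<Rightarrow> real" and B \<theta> \<epsilon> :: real
  assumes I: "finite I" and M: "\<And>i. i \<in> I \<Longrightarrow> prob_space (M i)"
    and sets_M: "\<And>i. i \<in> I \<Longrightarrow> sets (M i) = sets D"
    and f: "f \<in> borel_measurable (D \<Otimes>\<^sub>M D)" and f_bounds: "\<And>z. 0 \<le> f z \<and> f z \<le> B" and "0 < B"
    and L: "finite L" "L \<noteq> {}" "L \<subseteq> I \<times> I" "pair_matching L"
    and mean: "\<And>a b. (a, b) \<in> L \<Longrightarrow> (\<integral>x. f (x a, x b) \<partial>PiM I M) = \<theta>"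
    and "0 \<le> \<epsilon>"
  shows "measure (PiM I M) {x \<in> space (PiM I M). \<bar>(\<Sum>(a, b)\<in>L. f (x a, x b)) - card L * \<theta>\<bar> \<ge> \<epsilon>}
           \<le> 2 * exp (- 2 * \<epsilon>\<^sup>2 / (card L * B\<^sup>2))"
proof -
  interpret prob_space "PiM I M" by (rule prob_space_PiM) (rule M)
  define X where "X = (\<lambda>(p :: 'i \<times> 'i) x. f (x (fst p), x (snd p)))"
  have "indep_vars M (\<lambda>i x. x i) I"
    using indep_vars_PiM_components[of I M] I M L by blast
  then have "indep_vars (\<lambda>p. PiM {fst p, snd p} M) (\<lambda>p x. restrict x {fst p, snd p}) L"
    using L unfolding pair_matching_def by (intro indep_vars_restrict) auto
  moreover have "X p \<in> borel_measurable (PiM {fst p, snd p} M)" if "p \<in> L" for p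
    unfolding X_def using that L(3) sets_M by (intro measurable_PiM_pair_components[OF _ f]) auto
  ultimately have "indep_vars (\<lambda>_. borel) (\<lambda>p x. X p (restrict x {fst p, snd p})) L"
    by (rule indep_vars_compose2)
  then have "indep_vars (\<lambda>_. borel) X L"
    by (rule iffD1[OF indep_vars_cong, rotated 3]) (auto simp: X_def)
  then interpret indep_interval_bounded_random_variables "PiM I M" L X "\<lambda>_. 0" "\<lambda>_. B"
    by unfold_locales (use L f_bounds in \<open>auto simp: X_def\<close>)
  interpret Hoeffding_ineq "PiM I M" L X "\<lambda>_. 0" "\<lambda>_. B" "\<Sum>p\<in>L. expectation (X p)"
    by unfold_locales (rule reflexive)
  have "expectation (X p) = \<theta>" if "p \<in> L" for p
    using mean[of "fst p" "snd p"] that by (simp add: X_def)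
  then have "(\<Sum>p\<in>L. expectation (X p)) = card L * \<theta>"
    by simp
  moreover have "(\<Sum>p\<in>L. (B - 0)\<^sup>2) = card L * B\<^sup>2" "(\<Sum>p\<in>L. (B - 0)\<^sup>2) > 0"
    using L \<open>0 < B\<close> by (simp_all add: card_gt_0_iff)
  ultimately show ?thesis
    using Hoeffding_ineq_abs_ge[OF \<open>0 \<le> \<epsilon>\<close>] by (simp add: X_def split_beta)
qed

lemma Hoeffding_PiM_matching_relative:
  fixes M :: "'i \<Rightarrow> 'a measure" and f :: "'a \<times> 'a \<Rightarrow> real" and B \<theta> q s :: real
  assumes I: "finite I" and M: "\<And>i. i \<in> I \<Longrightarrow> prob_space (M i)"
    and sets_M: "\<And>i. i \<in> I \<Longrightarrow> sets (M i) = sets D"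
    and f: "f \<in> borel_measurable (D \<Otimes>\<^sub>M D)" and f_bounds: "\<And>z. 0 \<le> f z \<and> f z \<le> B" and "0 < B"
    and L: "finite L" "L \<noteq> {}" "L \<subseteq> I \<times> I" "pair_matching L"
    and mean: "\<And>a b. (a, b) \<in> L \<Longrightarrow> (\<integral>x. f (x a, x b) \<partial>PiM I M) = \<theta>"
    and "q \<le> card L" "0 < s"
  shows "measure (PiM I M)
           {x \<in> space (PiM I M). \<bar>(\<Sum>(a, b)\<in>L. f (x a, x b)) - card L * \<theta>\<bar> \<ge> card L * s}
         \<le> 2 * exp (- 2 * q * s\<^sup>2 / B\<^sup>2)"
proof -
  have "0 < real (card L)"
    using L by (simp add: card_gt_0_iff)
  have "measure (PiM I M)
      {x \<in> space (PiM I M). \<bar>(\<Sum>(a, b)\<in>L. f (x a, x b)) - card L * \<theta>\<bar> \<ge> card L * s}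
    \<le> 2 * exp (- 2 * (card L * s)\<^sup>2 / (card L * B\<^sup>2))"
    using \<open>0 < s\<close> by (intro Hoeffding_PiM_matching[OF I M sets_M f f_bounds \<open>0 < B\<close> L mean]) auto
  also have "- 2 * (card L * s)\<^sup>2 / (card L * B\<^sup>2) = - 2 * card L * s\<^sup>2 / B\<^sup>2"
    using \<open>0 < real (card L)\<close> by (simp add: power2_eq_square)
  also have "\<dots> \<le> - 2 * q * s\<^sup>2 / B\<^sup>2"
    using \<open>q \<le> card L\<close> by (simp add: divide_right_mono mult_right_mono)
  finally show ?thesis by simp
qed

lemma average_deviation_le_of_classwise:
  fixes S :: "'c \<Rightarrow> real" and n :: "'c \<Rightarrow> nat" and N \<theta> s :: real
  assumes "\<And>c. c \<in> C \<Longrightarrow> \<bar>S c - n c * \<theta>\<bar> \<le> n c * s" and "N = (\<Sum>c\<in>C. n c)" "0 < N"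
  shows "\<bar>(\<Sum>c\<in>C. S c) / N - \<theta>\<bar> \<le> s"
proof -
  have "\<bar>\<Sum>c\<in>C. S c - n c * \<theta>\<bar> \<le> (\<Sum>c\<in>C. n c * s)"
    using assms(1) by (intro order.trans[OF sum_abs] sum_mono)
  then have "\<bar>(\<Sum>c\<in>C. S c) - N * \<theta>\<bar> \<le> N * s"
    by (simp add: assms(2) sum_subtractf sum_distrib_right)
  then show ?thesis
    using \<open>0 < N\<close> by (simp add: field_simps)
qed

lemma Hoeffding_PiM_matchings:
  fixes M :: "'i \<Rightarrow> 'a measure" and f :: "'a \<times> 'a \<Rightarrow> real" and L :: "'c \<Rightarrow> ('i \<times> 'i) set"
    and B \<theta> q N s :: real
  assumes I: "finite I" and M: "\<And>i. i \<in> I \<Longrightarrow> prob_space (M i)"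
    and sets_M: "\<And>i. i \<in> I \<Longrightarrow> sets (M i) = sets D"
    and f: "f \<in> borel_measurable (D \<Otimes>\<^sub>M D)" and f_bounds: "\<And>z. 0 \<le> f z \<and> f z \<le> B" and "0 < B"
    and C: "finite C"
    and L: "\<And>c. c \<in> C \<Longrightarrow> finite (L c) \<and> L c \<subseteq> I \<times> I \<and> pair_matching (L c)"
    and mean: "\<And>c a b. c \<in> C \<Longrightarrow> (a, b) \<in> L c \<Longrightarrow> (\<integral>x. f (x a, x b) \<partial>PiM I M) = \<theta>"
    and q: "\<And>c. c \<in> C \<Longrightarrow> L c \<noteq> {} \<Longrightarrow> q \<le> card (L c)"
    and N: "N = (\<Sum>c\<in>C. card (L c))" "0 < N"
    and "0 < s"
  shows "measure (PiM I M)
           {x \<in> space (PiM I M). \<bar>(\<Sum>c\<in>C. \<Sum>(a, b)\<in>L c. f (x a, x b)) / N - \<theta>\<bar> > s}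
         \<le> 2 * card C * exp (- 2 * q * s\<^sup>2 / B\<^sup>2)"
proof -
  interpret prob_space "PiM I M" by (rule prob_space_PiM) (rule M)
  define S where "S c x = (\<Sum>(a, b)\<in>L c. f (x a, x b))" for c x
  define H where "H c = {x \<in> space (PiM I M). L c \<noteq> {} \<and> \<bar>S c x - card (L c) * \<theta>\<bar> \<ge> card (L c) * s}"
    for c
  have H_sets: "H c \<in> sets (PiM I M)" if "c \<in> C" for c
  proof -
    have "S c \<in> borel_measurable (PiM I M)"
      unfolding S_def split_beta using L[OF that] sets_M
      by (intro borel_measurable_sum measurable_PiM_pair_components[OF _ f]) auto
    then show ?thesis unfolding H_def by measurable
  qed
  have H_bound: "measure (PiM I M) (H c) \<le> 2 * exp (- 2 * q * s\<^sup>2 / B\<^sup>2)" if c: "c \<in> C" for c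
  proof (cases "L c = {}")
    case False
    then have "H c = {x \<in> space (PiM I M). \<bar>S c x - card (L c) * \<theta>\<bar> \<ge> card (L c) * s}"
      by (simp add: H_def)
    then show ?thesis
      unfolding S_def
      using Hoeffding_PiM_matching_relative[OF I M sets_M f f_bounds \<open>0 < B\<close>,
          where L = "L c" and q = q and s = s]
        False L[OF c] mean[OF c] q[OF c] \<open>0 < s\<close>
      by auto
  qed (simp add: H_def)
  have "{x \<in> space (PiM I M). \<bar>(\<Sum>c\<in>C. S c x) / N - \<theta>\<bar> > s} \<subseteq> (\<Union>c\<in>C. H c)"
  proof (rule subsetI, rule ccontr)
    fix x assume x: "x \<in> {x \<in> space (PiM I M). \<bar>(\<Sum>c\<in>C. S c x) / N - \<theta>\<bar> > s}"
      and "x \<notin> (\<Union>c\<in>C. H c)"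
    then have "\<bar>S c x - card (L c) * \<theta>\<bar> \<le> card (L c) * s" if "c \<in> C" for c
      using that by (cases "L c = {}") (auto simp: H_def S_def)
    then have "\<bar>(\<Sum>c\<in>C. S c x) / N - \<theta>\<bar> \<le> s"
      using N by (rule average_deviation_le_of_classwise)
    with x show False by simp
  qed
  then have "measure (PiM I M) {x \<in> space (PiM I M). \<bar>(\<Sum>c\<in>C. S c x) / N - \<theta>\<bar> > s}
      \<le> measure (PiM I M) (\<Union>c\<in>C. H c)"
    using H_sets C by (intro finite_measure_mono) auto
  also have "\<dots> \<le> (\<Sum>c\<in>C. measure (PiM I M) (H c))"
    using H_sets C by (intro finite_measure_subadditive_finite) auto
  also have "\<dots> \<le> (\<Sum>c\<in>C. 2 * exp (- 2 * q * s\<^sup>2 / B\<^sup>2))"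
    by (intro sum_mono H_bound)
  finally show ?thesis by (simp add: S_def)
qed

section \<open>Round-robin colourings of index pairs\<close>

definition sum_mod_class :: "nat \<Rightarrow> (nat \<times> nat) set \<Rightarrow> nat \<Rightarrow> (nat \<times> nat) set" where
  "sum_mod_class N S c = {p \<in> S. (fst p + snd p) mod N = c}"

lemma sum_over_sum_mod_classes:
  assumes "finite S" "0 < N"
  shows "(\<Sum>c<N. \<Sum>p\<in>sum_mod_class N S c. g p) = (\<Sum>p\<in>S. g p)"
  unfolding sum_mod_class_def using assms by (intro sum.group) auto

lemma mod_add_left_cancel_less:
  fixes i j j' N :: nat
  assumes "(i + j) mod N = (i + j') mod N" "j < N" "j' < N"
  shows "j = j'"
proof -
  have *: "j = j'" if h: "(i + j) mod N = (i + j') mod N" "j \<le> j'" "j' < N" for j j'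
  proof -
    obtain s where "i + j' = i + j + N * s"
      using mod_eq_nat1E[OF h(1)[symmetric]] h(2) by auto
    with h(3) show ?thesis by (cases s) auto
  qed
  show ?thesis
    using *[of j j'] *[of j' j] assms by (cases "j \<le> j'") auto
qed

lemma add_mod_complement:
  fixes i c N :: nat
  assumes "i < N"
  shows "(i + (c + N - i) mod N) mod N = c mod N"
proof -
  have "(i + (c + N - i) mod N) mod N = (i + (c + N - i)) mod N"
    by (simp add: mod_add_right_eq)
  also have "i + (c + N - i) = c + N"
    using assms by simp
  finally show ?thesis by simp
qed

lemma card_double_mod_le_2: "card {i. i < (m::nat) \<and> (i + i) mod m = c} \<le> 2"
proof -
  define Fix where "Fix = {i. i < m \<and> (i + i) mod m = c}"
  have "card Fix \<le> 2"
  proof (cases "Fix = {}")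
    case False
    define i0 where "i0 = Min Fix"
    have "finite Fix" by (simp add: Fix_def)
    then have i0: "i0 \<in> Fix" "\<And>i. i \<in> Fix \<Longrightarrow> i0 \<le> i"
      using False by (simp_all add: i0_def)
    have "i = i0 + m div 2" if i: "i \<in> Fix" "i \<noteq> i0" for i
    proof -
      have lt: "i0 < i" "i < m"
        using i i0 by (auto simp: Fix_def le_less)
      have "(i + i) mod m = (i0 + i0) mod m"
        using i i0 by (simp add: Fix_def)
      then obtain s where s: "i + i = i0 + i0 + m * s"
        using lt by (elim mod_eq_nat1E) auto
      have "s \<noteq> 0"
      proof
        assume "s = 0"
        with s lt show False by simp
      qed
      moreover have "s < 2"
      proof (rule ccontr)
        assume "\<not> s < 2"
        then have "m * 2 \<le> m * s" by simp
        with s lt show False by linarith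
      qed
      ultimately have "s = 1" by simp
      with s show ?thesis by simp
    qed
    then have "Fix \<subseteq> {i0, i0 + m div 2}" by blast
    then have "card Fix \<le> card {i0, i0 + m div 2}" by (intro card_mono) auto
    also have "\<dots> \<le> 2" by (simp add: card_insert_if)
    finally show ?thesis .
  qed simp
  then show ?thesis by (simp add: Fix_def)
qed

lemma finite_ordered_pairs_less: "finite {(i, j). i < j \<and> j < (m::nat)}"
  by (rule finite_subset[of _ "{..<m} \<times> {..<m}"]) auto

lemma card_ordered_pairs_less: "card {(i, j). i < j \<and> j < (m::nat)} = m choose 2"
proof (induction m)
  case (Suc m)
  have "{(i, j). i < j \<and> j < Suc m} = {(i, j). i < j \<and> j < m} \<union> (\<lambda>i. (i, m)) ` {..<m}"
    by auto
  moreover have "card ((\<lambda>i. (i, m)) ` {..<m}) = m"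
    by (subst card_image) (auto simp: inj_on_def)
  moreover have "card ({(i, j). i < j \<and> j < m} \<union> (\<lambda>i. (i, m)) ` {..<m})
      = card {(i, j). i < j \<and> j < m} + card ((\<lambda>i. (i, m)) ` {..<m})"
    using finite_ordered_pairs_less[of m] by (intro card_Un_disjoint) auto
  ultimately have "card {(i, j). i < j \<and> j < Suc m} = (m choose 2) + m"
    using Suc by simp
  then show ?case
    by (simp add: numeral_2_eq_2)
qed simp

lemma sum_ordered_pairs_mod_classes:
  assumes "0 < m"
  shows "(\<Sum>i<m. \<Sum>j\<in>{i<..<m}. g i j)
           = (\<Sum>c<m. \<Sum>(i, j)\<in>sum_mod_class m {(i, j). i < j \<and> j < m} c. g i j)"
proof -
  have "{(i, j). i < j \<and> j < m} = Sigma {..<m} (\<lambda>i. {i<..<m})"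
    by auto
  then have "(\<Sum>i<m. \<Sum>j\<in>{i<..<m}. g i j) = (\<Sum>(i, j)\<in>{(i, j). i < j \<and> j < m}. g i j)"
    by (simp add: sum.Sigma)
  also have "\<dots> = (\<Sum>c<m. \<Sum>(i, j)\<in>sum_mod_class m {(i, j). i < j \<and> j < m} c. g i j)"
    using assms finite_ordered_pairs_less by (intro sum_over_sum_mod_classes[symmetric]) auto
  finally show ?thesis .
qed

lemma sum_card_ordered_classes:
  "0 < m \<Longrightarrow> (\<Sum>c<m. card (sum_mod_class m {(i, j). i < j \<and> j < m} c)) = m choose 2"
  using sum_over_sum_mod_classes[of "{(i, j). i < j \<and> j < m}" m "\<lambda>_. 1::nat"]
  by (simp add: finite_ordered_pairs_less card_ordered_pairs_less flip: card_eq_sum)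

lemma pair_matching_ordered_class:
  "pair_matching (sum_mod_class m {(i, j). i < j \<and> j < m} c)"
proof (rule pair_matchingI)
  fix i j i' j'
  assume "(i, j) \<in> sum_mod_class m {(i, j). i < j \<and> j < m} c"
    "(i', j') \<in> sum_mod_class m {(i, j). i < j \<and> j < m} c" and ne: "(i, j) \<noteq> (i', j')"
  then have lt: "i < j" "j < m" "i' < j'" "j' < m" and mod: "(i + j) mod m = (i' + j') mod m"
    by (auto simp: sum_mod_class_def)
  have "i \<noteq> i'"
  proof
    assume "i = i'"
    then have "(i + j) mod m = (i + j') mod m" using mod by simp
    from mod_add_left_cancel_less[OF this] lt have "j = j'" by auto
    with ne \<open>i = i'\<close> show False by simp
  qed
  moreover have "j \<noteq> j'"
  proof
    assume "j = j'"
    then have "(j + i) mod m = (j + i') mod m" using mod by (simp add: add.commute)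
    from mod_add_left_cancel_less[OF this] lt have "i = i'" by auto
    with ne \<open>j = j'\<close> show False by simp
  qed
  moreover have "i \<noteq> j'"
  proof
    assume "i = j'"
    then have "(i + j) mod m = (i + i') mod m" using mod by (simp add: add.commute)
    from mod_add_left_cancel_less[OF this] lt have "j = i'" by auto
    with lt \<open>i = j'\<close> show False by simp
  qed
  moreover have "j \<noteq> i'"
  proof
    assume "j = i'"
    then have "(j + i) mod m = (j + j') mod m" using mod by (simp add: add.commute)
    from mod_add_left_cancel_less[OF this] lt have "i = j'" by auto
    with lt \<open>j = i'\<close> show False by simp
  qed
  ultimately show "i \<noteq> i' \<and> j \<noteq> j' \<and> i \<noteq> j' \<and> j \<noteq> i'"
    by blast
qed (auto simp: sum_mod_class_def)

lemma card_ordered_class_lower: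
  assumes "c < m"
  shows "m \<le> 2 * card (sum_mod_class m {(i, j). i < j \<and> j < m} c) + 2"
proof -
  let ?K = "sum_mod_class m {(i, j). i < j \<and> j < m} c"
  let ?Fix = "{i. i < m \<and> (i + i) mod m = c}"
  have "finite ?K"
    by (rule finite_subset[OF _ finite_ordered_pairs_less]) (auto simp: sum_mod_class_def)
  have "{..<m} \<subseteq> fst ` ?K \<union> snd ` ?K \<union> ?Fix"
  proof
    fix i assume "i \<in> {..<m}"
    define j where "j = (c + m - i) mod m"
    have "j < m"
      using assms by (simp add: j_def)
    have "(i + j) mod m = c"
      using \<open>i \<in> {..<m}\<close> assms add_mod_complement[of i m c] by (simp add: j_def)
    then have "(j + i) mod m = c"
      by (simp add: add.commute)
    consider "i < j" | "j < i" | "j = i" by linarith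
    then show "i \<in> fst ` ?K \<union> snd ` ?K \<union> ?Fix"
    proof cases
      case 1
      then have "(i, j) \<in> ?K" using \<open>j < m\<close> \<open>(i + j) mod m = c\<close> by (simp add: sum_mod_class_def)
      then show ?thesis by force
    next
      case 2
      then have "(j, i) \<in> ?K"
        using \<open>i \<in> {..<m}\<close> \<open>(j + i) mod m = c\<close> by (simp add: sum_mod_class_def)
      then show ?thesis by force
    next
      case 3
      then show ?thesis using \<open>i \<in> {..<m}\<close> \<open>(i + j) mod m = c\<close> by simp
    qed
  qed
  then have "card {..<m} \<le> card (fst ` ?K \<union> snd ` ?K \<union> ?Fix)"
    using \<open>finite ?K\<close> by (intro card_mono) auto
  then have "m \<le> card (fst ` ?K \<union> snd ` ?K \<union> ?Fix)"
    by simp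
  also have "\<dots> \<le> card (fst ` ?K) + card (snd ` ?K) + card ?Fix"
    by (meson add_right_mono card_Un_le order_trans)
  also have "\<dots> \<le> 2 * card ?K + 2"
    using card_image_le[OF \<open>finite ?K\<close>, of fst] card_image_le[OF \<open>finite ?K\<close>, of snd]
      card_double_mod_le_2[of m c] by linarith
  finally show ?thesis .
qed

lemma sum_rectangle_mod_classes:
  "0 < max a b \<Longrightarrow> (\<Sum>i<a. \<Sum>j<b. g i j)
     = (\<Sum>c<max a b. \<Sum>(i, j)\<in>sum_mod_class (max a b) ({..<a} \<times> {..<b}) c. g i j)"
  by (simp add: sum.cartesian_product sum_over_sum_mod_classes)

lemma sum_card_rectangle_classes:
  "0 < max a b \<Longrightarrow> (\<Sum>c<max a b. card (sum_mod_class (max a b) ({..<a} \<times> {..<b}) c)) = a * b"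
  using sum_over_sum_mod_classes[of "{..<a} \<times> {..<b}" "max a b" "\<lambda>_. 1::nat"]
  by (simp flip: card_eq_sum)

lemma pair_matching_cross_class:
  "pair_matching (map_prod id ((+) a) ` sum_mod_class (max a b) ({..<a} \<times> {..<b}) c)"
proof (rule pair_matchingI)
  fix x y x' y'
  assume "(x, y) \<in> map_prod id ((+) a) ` sum_mod_class (max a b) ({..<a} \<times> {..<b}) c"
    "(x', y') \<in> map_prod id ((+) a) ` sum_mod_class (max a b) ({..<a} \<times> {..<b}) c"
    and ne: "(x, y) \<noteq> (x', y')"
  then obtain i j i' j' where ij: "x = i" "y = a + j" "x' = i'" "y' = a + j'"
    and lt: "i < a" "j < b" "i' < a" "j' < b"
    and mod: "(i + j) mod max a b = (i' + j') mod max a b"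
    by (auto simp: sum_mod_class_def)
  have "i \<noteq> i'"
  proof
    assume "i = i'"
    then have "(i + j) mod max a b = (i + j') mod max a b" using mod by simp
    from mod_add_left_cancel_less[OF this] lt have "j = j'" by auto
    with ne ij \<open>i = i'\<close> show False by simp
  qed
  moreover have "j \<noteq> j'"
  proof
    assume "j = j'"
    then have "(j + i) mod max a b = (j + i') mod max a b" using mod by (simp add: add.commute)
    from mod_add_left_cancel_less[OF this] lt have "i = i'" by auto
    with ne ij \<open>j = j'\<close> show False by simp
  qed
  ultimately show "x \<noteq> x' \<and> y \<noteq> y' \<and> x \<noteq> y' \<and> y \<noteq> x'"
    using ij lt by auto
qed (auto simp: sum_mod_class_def)

lemma card_cross_class_lower:
  assumes "c < max a b"
  shows "min a b \<le> card (sum_mod_class (max a b) ({..<a} \<times> {..<b}) c)"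
proof -
  let ?K = "sum_mod_class (max a b) ({..<a} \<times> {..<b}) c"
  have "finite ?K" by (simp add: sum_mod_class_def)
  show ?thesis
  proof (cases "a \<le> b")
    case True
    have "{..<a} \<subseteq> fst ` ?K"
    proof
      fix i assume "i \<in> {..<a}"
      then have "(i, (c + b - i) mod b) \<in> ?K"
        using True assms add_mod_complement[of i b c] by (auto simp: sum_mod_class_def max_def)
      then show "i \<in> fst ` ?K" by force
    qed
    then have "a \<le> card (fst ` ?K)"
      by (metis card_lessThan card_mono finite_imageI \<open>finite ?K\<close>)
    then show ?thesis
      using True card_image_le[OF \<open>finite ?K\<close>, of fst] by simp
  next
    case False
    have "{..<b} \<subseteq> snd ` ?K"
    proof
      fix j assume "j \<in> {..<b}"
      then have "((c + a - j) mod a, j) \<in> ?K"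
        using False assms add_mod_complement[of j a c]
        by (auto simp: sum_mod_class_def max_def add.commute)
      then show "j \<in> snd ` ?K" by force
    qed
    then have "b \<le> card (snd ` ?K)"
      by (metis card_lessThan card_mono finite_imageI \<open>finite ?K\<close>)
    then show ?thesis
      using False card_image_le[OF \<open>finite ?K\<close>, of snd] by simp
  qed
qed

section \<open>Pooling two samples\<close>

definition concat_samples :: "nat \<Rightarrow> nat \<Rightarrow> (nat \<Rightarrow> 'a) \<times> (nat \<Rightarrow> 'a) \<Rightarrow> nat \<Rightarrow> 'a" where
  "concat_samples m1 m2 = (\<lambda>(x, y). \<lambda>i\<in>{..<m1 + m2}. if i < m1 then x i else y (i - m1))"

lemma distr_PiM_concat_samples:
  fixes F G :: "'a measure" and m1 m2 :: nat
  assumes F: "prob_space F" and G: "prob_space G"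
  defines "M \<equiv> \<lambda>i. if i < m1 then F else G"
  shows "concat_samples m1 m2
           \<in> measurable (PiM {..<m1} (\<lambda>_. F) \<Otimes>\<^sub>M PiM {..<m2} (\<lambda>_. G)) (PiM {..<m1 + m2} M)"
    and "distr (PiM {..<m1} (\<lambda>_. F) \<Otimes>\<^sub>M PiM {..<m2} (\<lambda>_. G)) (PiM {..<m1 + m2} M)
           (concat_samples m1 m2) = PiM {..<m1 + m2} M"
proof -
  let ?I2 = "{m1..<m1 + m2}"
  define shift where "shift y = (\<lambda>i\<in>?I2. y (i - m1))" for y :: "nat \<Rightarrow> 'a"
  interpret product_sigma_finite M
    unfolding product_sigma_finite_def M_def
    using F G by (auto intro: prob_space_imp_sigma_finite)
  interpret I2: prob_space "PiM ?I2 M"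
    using F G by (intro prob_space_PiM) (auto simp: M_def)
  have F_M: "PiM {..<m1} (\<lambda>_. F) = PiM {..<m1} M"
    by (rule PiM_cong) (auto simp: M_def)
  have G_M: "PiM ?I2 (\<lambda>_. G) = PiM ?I2 M"
    by (rule PiM_cong) (auto simp: M_def)
  have shift[measurable]: "shift \<in> measurable (PiM {..<m2} (\<lambda>_. G)) (PiM ?I2 M)"
    unfolding shift_def M_def by (intro measurable_restrict) auto
  have "distr (PiM {..<m2} (\<lambda>_. G)) (PiM ?I2 M) shift = PiM ?I2 M"
    unfolding shift_def G_M[symmetric]
    by (rule distr_PiM_reindex[where M="\<lambda>_. G" and f="\<lambda>i. i - m1"]) (auto simp: G inj_on_def)
  then have pair: "distr (PiM {..<m1} M \<Otimes>\<^sub>M PiM {..<m2} (\<lambda>_. G)) (PiM {..<m1} M \<Otimes>\<^sub>M PiM ?I2 M)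
      (\<lambda>(x, y). (x, shift y)) = PiM {..<m1} M \<Otimes>\<^sub>M PiM ?I2 M"
    using pair_measure_distr[OF measurable_ident_sets[OF refl, of "PiM {..<m1} M"] shift]
      I2.sigma_finite_measure_axioms
    by simp
  have split: "{..<m1} \<union> ?I2 = {..<m1 + m2}" and disjoint: "{..<m1} \<inter> ?I2 = {}"
    by auto
  have concat_samples_eq: "concat_samples m1 m2 = merge {..<m1} ?I2 \<circ> (\<lambda>(x, y). (x, shift y))"
    by (auto simp: concat_samples_def shift_def merge_def fun_eq_iff)
  show "concat_samples m1 m2
      \<in> measurable (PiM {..<m1} (\<lambda>_. F) \<Otimes>\<^sub>M PiM {..<m2} (\<lambda>_. G)) (PiM {..<m1 + m2} M)"
    unfolding concat_samples_eq F_M split[symmetric] by measurable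
  have "distr (PiM {..<m1} M \<Otimes>\<^sub>M PiM {..<m2} (\<lambda>_. G)) (PiM ({..<m1} \<union> ?I2) M)
      (merge {..<m1} ?I2 \<circ> (\<lambda>(x, y). (x, shift y)))
    = distr (distr (PiM {..<m1} M \<Otimes>\<^sub>M PiM {..<m2} (\<lambda>_. G)) (PiM {..<m1} M \<Otimes>\<^sub>M PiM ?I2 M)
        (\<lambda>(x, y). (x, shift y))) (PiM ({..<m1} \<union> ?I2) M) (merge {..<m1} ?I2)"
    by (intro distr_distr[symmetric]) measurable
  also have "\<dots> = PiM ({..<m1} \<union> ?I2) M"
    unfolding pair using disjoint by (intro distr_merge) auto
  finally show "distr (PiM {..<m1} (\<lambda>_. F) \<Otimes>\<^sub>M PiM {..<m2} (\<lambda>_. G)) (PiM {..<m1 + m2} M)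
      (concat_samples m1 m2) = PiM {..<m1 + m2} M"
    unfolding concat_samples_eq F_M split .
qed

section \<open>Order statistics\<close>

lemma sorted_nth_le_of_count:
  fixes xs :: "'a::linorder list"
  assumes "sorted xs" and "k < length (filter (\<lambda>x. x \<le> v) xs)"
  shows "xs ! k \<le> v"
proof (rule ccontr)
  assume "\<not> xs ! k \<le> v"
  then have "{j. j < length xs \<and> xs ! j \<le> v} \<subseteq> {..<k}"
    using assms(1) by (auto simp: not_less intro: order.trans[OF sorted_nth_mono])
  then have "card {j. j < length xs \<and> xs ! j \<le> v} \<le> k"
    by (metis card_lessThan card_mono finite_lessThan)
  with assms(2) show False
    by (simp add: length_filter_conv_card)
qed

lemma count_le_sorted_nth:
  fixes xs :: "'a::linorder list"
  assumes "sorted xs" and "k < length xs"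
  shows "k < length (filter (\<lambda>x. x \<le> xs ! k) xs)"
proof -
  have "{..k} \<subseteq> {j. j < length xs \<and> xs ! j \<le> xs ! k}"
    using assms by (auto simp: sorted_nth_mono)
  then have "card {..k} \<le> card {j. j < length xs \<and> xs ! j \<le> xs ! k}"
    by (intro card_mono) auto
  then show ?thesis
    by (simp add: length_filter_conv_card)
qed

lemma sort_nth_le_add:
  fixes a b :: "nat \<Rightarrow> real"
  assumes ab: "\<And>i. i < d \<Longrightarrow> a i \<le> b i + t" and "k < d"
  shows "sort (map a [0..<d]) ! k \<le> sort (map b [0..<d]) ! k + t"
proof -
  have count: "length (filter P (sort (map f [0..<d]))) = card {i. i < d \<and> P (f i)}"
    for P and f :: "nat \<Rightarrow> real"
  proof -
    have "length (filter P (sort (map f [0..<d]))) = length (filter P (map f [0..<d]))"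
      by (metis mset_filter mset_sort size_mset)
    also have "\<dots> = card {i. i < d \<and> P (f i)}"
      unfolding length_filter_conv_card by (intro arg_cong[where f = card]) auto
    finally show ?thesis .
  qed
  let ?v = "sort (map b [0..<d]) ! k"
  have "k < card {i. i < d \<and> b i \<le> ?v}"
    using count_le_sorted_nth[of "sort (map b [0..<d])" k] \<open>k < d\<close> by (simp add: count)
  also have "\<dots> \<le> card {i. i < d \<and> a i \<le> ?v + t}"
    by (intro card_mono) (use ab in force)+
  finally show ?thesis
    by (intro sorted_nth_le_of_count) (simp_all add: count)
qed

lemma ordstat_abs_diff_le:
  assumes "\<And>i. i < d \<Longrightarrow> \<bar>a i - b i\<bar> \<le> t" and "k < d"
  shows "\<bar>ordstat a d k - ordstat b d k\<bar> \<le> t"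
proof -
  have "ordstat a d k \<le> ordstat b d k + t" "ordstat b d k \<le> ordstat a d k + t"
    unfolding ordstat_def using assms
    by (intro sort_nth_le_add; force simp: abs_le_iff)+
  then show ?thesis by linarith
qed

section \<open>Deviation of two-sample U-statistics\<close>

definition U_within :: "('a \<times> 'a \<Rightarrow> real) \<Rightarrow> nat \<Rightarrow> nat \<Rightarrow> (nat \<Rightarrow> 'a) \<Rightarrow> real" where
  "U_within f r m z = (\<Sum>i<m. \<Sum>j\<in>{i<..<m}. f (z (r + i), z (r + j))) / (m choose 2)"

definition U_cross :: "('a \<times> 'a \<Rightarrow> real) \<Rightarrow> nat \<Rightarrow> nat \<Rightarrow> (nat \<Rightarrow> 'a) \<Rightarrow> real" where
  "U_cross f m1 m2 z = (\<Sum>i<m1. \<Sum>j<m2. f (z i, z (m1 + j))) / (m1 * m2)"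

definition energy_statistic :: "('a \<times> 'a \<Rightarrow> real) \<Rightarrow> nat \<Rightarrow> nat \<Rightarrow> (nat \<Rightarrow> 'a) \<Rightarrow> real" where
  "energy_statistic f m1 m2 z = 2 * U_cross f m1 m2 z - U_within f 0 m1 z - U_within f m1 m2 z"

definition energy_mean :: "('a \<times> 'a \<Rightarrow> real) \<Rightarrow> 'a measure \<Rightarrow> 'a measure \<Rightarrow> real" where
  "energy_mean f F G = 2 * (\<integral>x. (\<integral>y. f (x, y) \<partial>G) \<partial>F) - (\<integral>x. (\<integral>y. f (x, y) \<partial>F) \<partial>F)
     - (\<integral>x. (\<integral>y. f (x, y) \<partial>G) \<partial>G)"

locale two_sample_kernel =
  fixes F G D :: "'a measure" and m1 m2 :: nat and f :: "'a \<times> 'a \<Rightarrow> real" and B :: real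
  assumes F: "prob_space F" and G: "prob_space G"
    and sets_F: "sets F = sets D" and sets_G: "sets G = sets D"
    and f: "f \<in> borel_measurable (D \<Otimes>\<^sub>M D)"
    and f_bounds: "\<And>z. 0 \<le> f z \<and> f z \<le> B" and B_pos: "0 < B"
begin

abbreviation pooled :: "nat \<Rightarrow> 'a measure" where
  "pooled \<equiv> \<lambda>i. if i < m1 then F else G"

abbreviation pooled_sample :: "(nat \<Rightarrow> 'a) measure" where
  "pooled_sample \<equiv> PiM {..<m1 + m2} pooled"

lemma prob_space_pooled: "i \<in> {..<m1 + m2} \<Longrightarrow> prob_space (pooled i)"
  using F G by simp

lemma sets_pooled: "i \<in> {..<m1 + m2} \<Longrightarrow> sets (pooled i) = sets D"
  using sets_F sets_G by simp

lemma integral_pooled_pair: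
  assumes "a < m1 + m2" "b < m1 + m2" "a \<noteq> b"
  shows "(\<integral>z. f (z a, z b) \<partial>pooled_sample) = (\<integral>x. (\<integral>y. f (x, y) \<partial>pooled b) \<partial>pooled a)"
  using assms f_bounds
  by (intro integral_PiM_pair_components[OF _ prob_space_pooled sets_pooled f, where B = B])
    (auto simp: abs_le_iff intro: order.trans[of _ 0])

lemma U_within_deviation:
  fixes q s :: real
  assumes block: "\<And>i. i < m \<Longrightarrow> r + i < m1 + m2 \<and> pooled (r + i) = H"
    and "4 \<le> m" "0 < q" "q \<le> m / 4" "0 < s"
  shows "measure pooled_sample
           {z \<in> space pooled_sample. \<bar>U_within f r m z - (\<integral>x. (\<integral>y. f (x, y) \<partial>H) \<partial>H)\<bar> > s}
         \<le> 2 * m * exp (- 2 * q * s\<^sup>2 / B\<^sup>2)"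
proof -
  let ?W = "{(i, j). i < j \<and> j < m}"
  let ?shift = "map_prod ((+) r) ((+) r)"
  define L where "L c = ?shift ` sum_mod_class m ?W c" for c
  have inj: "inj_on ?shift A" for A
    by (auto simp: inj_on_def)
  have finite_class: "finite (sum_mod_class m ?W c)" for c
    by (rule finite_subset[OF _ finite_ordered_pairs_less]) (auto simp: sum_mod_class_def)
  have card_L: "card (L c) = card (sum_mod_class m ?W c)" for c
    unfolding L_def by (rule card_image[OF inj])
  have sum_eq: "(\<Sum>i<m. \<Sum>j\<in>{i<..<m}. f (z (r + i), z (r + j)))
      = (\<Sum>c\<in>{..<m}. \<Sum>(a, b)\<in>L c. f (z a, z b))" for z
    using \<open>4 \<le> m\<close> by (simp add: sum_ordered_pairs_mod_classes L_def sum.reindex[OF inj] split_beta)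
  have N: "real (m choose 2) = (\<Sum>c\<in>{..<m}. real (card (L c)))"
    using \<open>4 \<le> m\<close> sum_card_ordered_classes[of m] by (simp add: card_L flip: of_nat_sum)
  have "measure pooled_sample {z \<in> space pooled_sample.
      \<bar>(\<Sum>c\<in>{..<m}. \<Sum>(a, b)\<in>L c. f (z a, z b)) / real (m choose 2) - (\<integral>x. (\<integral>y. f (x, y) \<partial>H) \<partial>H)\<bar> > s}
    \<le> 2 * card {..<m} * exp (- 2 * q * s\<^sup>2 / B\<^sup>2)"
  proof (rule Hoeffding_PiM_matchings[OF _ prob_space_pooled sets_pooled f f_bounds B_pos])
    fix c assume "c \<in> {..<m}"
    have "pair_matching (L c)"
      unfolding L_def
      by (intro pair_matching_image pair_matching_ordered_class) (auto simp: inj_def)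
    then show "finite (L c) \<and> L c \<subseteq> {..<m1 + m2} \<times> {..<m1 + m2} \<and> pair_matching (L c)"
      unfolding L_def using finite_class block by (auto simp: sum_mod_class_def)
    show "(\<integral>x. f (x a, x b) \<partial>pooled_sample) = (\<integral>x. (\<integral>y. f (x, y) \<partial>H) \<partial>H)" if "(a, b) \<in> L c" for a b
      using that block by (auto simp: L_def sum_mod_class_def integral_pooled_pair)
    from card_ordered_class_lower[of c m] \<open>c \<in> {..<m}\<close>
    have "real m \<le> 2 * real (card (L c)) + 2"
      unfolding card_L by (simp add: of_nat_le_iff[symmetric])
    then show "q \<le> card (L c)"
      using \<open>q \<le> m / 4\<close> \<open>4 \<le> m\<close> by linarith
  next
    show "0 < real (m choose 2)"
      using \<open>4 \<le> m\<close> by simp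
  qed (use N \<open>0 < s\<close> in auto)
  then show ?thesis
    by (simp add: U_within_def sum_eq)
qed

lemma U_cross_deviation:
  fixes q s :: real
  assumes "0 < q" "q \<le> m1" "q \<le> m2" "0 < s"
  shows "measure pooled_sample
           {z \<in> space pooled_sample. \<bar>U_cross f m1 m2 z - (\<integral>x. (\<integral>y. f (x, y) \<partial>G) \<partial>F)\<bar> > s}
         \<le> 2 * real (m1 + m2) * exp (- 2 * q * s\<^sup>2 / B\<^sup>2)"
proof -
  let ?R = "{..<m1} \<times> {..<m2}"
  let ?N = "max m1 m2"
  let ?shift = "map_prod id ((+) m1)"
  define L where "L c = ?shift ` sum_mod_class ?N ?R c" for c
  have inj: "inj_on ?shift A" for A :: "(nat \<times> nat) set"
    by (auto simp: inj_on_def)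
  have card_L: "card (L c) = card (sum_mod_class ?N ?R c)" for c
    unfolding L_def by (rule card_image[OF inj])
  have "0 < m1" "0 < m2"
    using assms by linarith+
  then have "0 < ?N" by simp
  have sum_eq: "(\<Sum>i<m1. \<Sum>j<m2. f (z i, z (m1 + j)))
      = (\<Sum>c\<in>{..<?N}. \<Sum>(a, b)\<in>L c. f (z a, z b))" for z
    using \<open>0 < ?N\<close> by (simp add: sum_rectangle_mod_classes L_def sum.reindex[OF inj] split_beta)
  have N: "real m1 * real m2 = (\<Sum>c\<in>{..<?N}. real (card (L c)))"
    using \<open>0 < ?N\<close> sum_card_rectangle_classes[of m1 m2] by (simp add: card_L flip: of_nat_sum)
  have "measure pooled_sample {z \<in> space pooled_sample.
      \<bar>(\<Sum>c\<in>{..<?N}. \<Sum>(a, b)\<in>L c. f (z a, z b)) / (real m1 * real m2)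
        - (\<integral>x. (\<integral>y. f (x, y) \<partial>G) \<partial>F)\<bar> > s}
    \<le> 2 * card {..<?N} * exp (- 2 * q * s\<^sup>2 / B\<^sup>2)"
  proof (rule Hoeffding_PiM_matchings[OF _ prob_space_pooled sets_pooled f f_bounds B_pos])
    fix c assume "c \<in> {..<?N}"
    show "finite (L c) \<and> L c \<subseteq> {..<m1 + m2} \<times> {..<m1 + m2} \<and> pair_matching (L c)"
      unfolding L_def using pair_matching_cross_class[of m1 m2 c]
      by (auto simp: sum_mod_class_def)
    show "(\<integral>x. f (x a, x b) \<partial>pooled_sample) = (\<integral>x. (\<integral>y. f (x, y) \<partial>G) \<partial>F)" if "(a, b) \<in> L c" for a b
      using that by (auto simp: L_def sum_mod_class_def integral_pooled_pair)
    from card_cross_class_lower[of c m1 m2] \<open>c \<in> {..<?N}\<close>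
    have "real (min m1 m2) \<le> real (card (L c))"
      unfolding card_L by simp
    then show "q \<le> card (L c)"
      using assms by linarith
  next
    show "0 < real m1 * real m2"
      using \<open>0 < m1\<close> \<open>0 < m2\<close> by simp
  qed (use N \<open>0 < s\<close> in auto)
  also have "\<dots> \<le> 2 * real (m1 + m2) * exp (- 2 * q * s\<^sup>2 / B\<^sup>2)"
    by (intro mult_right_mono) auto
  finally show ?thesis
    by (simp add: U_cross_def sum_eq)
qed

lemma borel_measurable_pooled_pair:
  "a < m1 + m2 \<Longrightarrow> b < m1 + m2 \<Longrightarrow> (\<lambda>z. f (z a, z b)) \<in> borel_measurable pooled_sample"
  by (intro measurable_PiM_pair_components[OF sets_pooled f]) auto

lemma borel_measurable_U_within:
  "r + m \<le> m1 + m2 \<Longrightarrow> U_within f r m \<in> borel_measurable pooled_sample"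
  unfolding U_within_def
  by (intro borel_measurable_divide borel_measurable_sum borel_measurable_pooled_pair
      borel_measurable_const) auto

lemma borel_measurable_U_cross: "U_cross f m1 m2 \<in> borel_measurable pooled_sample"
  unfolding U_cross_def
  by (intro borel_measurable_divide borel_measurable_sum borel_measurable_pooled_pair
      borel_measurable_const) auto

lemma borel_measurable_energy_statistic: "energy_statistic f m1 m2 \<in> borel_measurable pooled_sample"
  unfolding energy_statistic_def
  using borel_measurable_U_cross borel_measurable_U_within[of 0 m1]
    borel_measurable_U_within[of m1 m2]
  by measurable

lemma energy_statistic_deviation:
  fixes q s :: real
  assumes "4 \<le> m1" "4 \<le> m2" "0 < q" "q \<le> m1 / 4" "q \<le> m2 / 4" "0 < s"
  shows "measure pooled_sample
           {z \<in> space pooled_sample. \<bar>energy_statistic f m1 m2 z - energy_mean f F G\<bar> > 4 * s}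
           \<le> 4 * real (m1 + m2) * exp (- 2 * q * s\<^sup>2 / B\<^sup>2)"
proof -
  interpret prob_space pooled_sample
    by (rule prob_space_PiM) (rule prob_space_pooled)
  define A1 where
    "A1 = {z \<in> space pooled_sample. \<bar>U_cross f m1 m2 z - (\<integral>x. (\<integral>y. f (x, y) \<partial>G) \<partial>F)\<bar> > s}"
  define A2 where
    "A2 = {z \<in> space pooled_sample. \<bar>U_within f 0 m1 z - (\<integral>x. (\<integral>y. f (x, y) \<partial>F) \<partial>F)\<bar> > s}"
  define A3 where
    "A3 = {z \<in> space pooled_sample. \<bar>U_within f m1 m2 z - (\<integral>x. (\<integral>y. f (x, y) \<partial>G) \<partial>G)\<bar> > s}"
  define e where "e = exp (- 2 * q * s\<^sup>2 / B\<^sup>2)"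
  have sets: "A1 \<in> sets pooled_sample" "A2 \<in> sets pooled_sample" "A3 \<in> sets pooled_sample"
    unfolding A1_def A2_def A3_def
    using borel_measurable_U_cross borel_measurable_U_within[of 0 m1]
      borel_measurable_U_within[of m1 m2]
    by measurable
  have "measure pooled_sample A1 \<le> 2 * real (m1 + m2) * e"
    unfolding A1_def e_def using assms by (intro U_cross_deviation) auto
  moreover have "measure pooled_sample A2 \<le> 2 * real m1 * e"
    unfolding A2_def e_def using assms by (intro U_within_deviation) auto
  moreover have "measure pooled_sample A3 \<le> 2 * real m2 * e"
    unfolding A3_def e_def using assms by (intro U_within_deviation) auto
  moreover have "measure pooled_sample (A1 \<union> A2 \<union> A3)
      \<le> measure pooled_sample A1 + measure pooled_sample A2 + measure pooled_sample A3"
    using sets measure_Un_le[of A1 pooled_sample A2] measure_Un_le[of "A1 \<union> A2" pooled_sample A3]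
    by auto
  moreover have "{z \<in> space pooled_sample. \<bar>energy_statistic f m1 m2 z - energy_mean f F G\<bar> > 4 * s}
      \<subseteq> A1 \<union> A2 \<union> A3"
    unfolding A1_def A2_def A3_def energy_statistic_def energy_mean_def by auto
  then have "measure pooled_sample
      {z \<in> space pooled_sample. \<bar>energy_statistic f m1 m2 z - energy_mean f F G\<bar> > 4 * s}
      \<le> measure pooled_sample (A1 \<union> A2 \<union> A3)"
    using sets by (intro finite_measure_mono) auto
  ultimately show ?thesis
    unfolding e_def[symmetric] by (simp add: algebra_simps)
qed

end

section \<open>Coordinatewise energy distances\<close>

lemma borel_measurable_coordinate_kernel:
  fixes \<gamma> :: "real \<Rightarrow> real"
  assumes "continuous_on {0..} \<gamma>" "k < d"
  shows "(\<lambda>(x, y). \<gamma> (\<bar>x k - y k\<bar>\<^sup>2))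
           \<in> borel_measurable (PiM {..<d} (\<lambda>_. lborel) \<Otimes>\<^sub>M PiM {..<d} (\<lambda>_. lborel))"
proof -
  have "continuous_on UNIV (\<lambda>u. \<gamma> (\<bar>u\<bar>\<^sup>2))"
    by (intro continuous_on_compose2[OF assms(1)] continuous_intros) auto
  then have [measurable]: "(\<lambda>u. \<gamma> (\<bar>u\<bar>\<^sup>2)) \<in> borel_measurable borel"
    by (rule borel_measurable_continuous_onI)
  have [measurable]: "(\<lambda>x. x k) \<in> borel_measurable (PiM {..<d} (\<lambda>_. lborel))"
    using assms(2) measurable_component_singleton[of k "{..<d}" "\<lambda>_. lborel"]
    by (simp add: measurable_cong_sets[OF refl sets_lborel])
  show ?thesis
    unfolding split_beta' by measurable
qed

lemma two_sample_kernel_coordinate: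
  fixes \<gamma> :: "real \<Rightarrow> real" and F G :: "(nat \<Rightarrow> real) measure" and B :: real
  assumes F: "prob_space F" "sets F = sets (PiM {..<d} (\<lambda>_. lborel))"
    and G: "prob_space G" "sets G = sets (PiM {..<d} (\<lambda>_. lborel))"
    and \<gamma>: "continuous_on {0..} \<gamma>" "\<And>u. 0 \<le> u \<Longrightarrow> 0 \<le> \<gamma> u \<and> \<gamma> u \<le> B" and "0 < B"
    and "k < d"
  shows "two_sample_kernel F G (PiM {..<d} (\<lambda>_. lborel)) (\<lambda>(x, y). \<gamma> (\<bar>x k - y k\<bar>\<^sup>2)) B"
proof (rule two_sample_kernel.intro)
  show "(\<lambda>(x, y). \<gamma> (\<bar>x k - y k\<bar>\<^sup>2))
      \<in> borel_measurable (PiM {..<d} (\<lambda>_. lborel) \<Otimes>\<^sub>M PiM {..<d} (\<lambda>_. lborel))"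
    by (rule borel_measurable_coordinate_kernel[OF \<gamma>(1) \<open>k < d\<close>])
  show "0 \<le> (\<lambda>(x, y). \<gamma> (\<bar>x k - y k\<bar>\<^sup>2)) z \<and> (\<lambda>(x, y). \<gamma> (\<bar>x k - y k\<bar>\<^sup>2)) z \<le> B" for z
    unfolding split_beta by (rule \<gamma>(2)) simp
qed (simp_all add: F G \<open>0 < B\<close>)

lemma energy_hat_coord_concat_samples:
  "energy_hat_coord \<gamma> m1 m2 (fst \<omega>) (snd \<omega>) k
     = energy_statistic (\<lambda>(x, y). \<gamma> (\<bar>x k - y k\<bar>\<^sup>2)) m1 m2 (concat_samples m1 m2 \<omega>)"
  by (cases \<omega>)
    (simp add: energy_hat_coord_def energy_statistic_def
      U_cross_def U_within_def concat_samples_def)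

lemma energy_coord_eq_energy_mean:
  "energy_coord \<gamma> F G k = energy_mean (\<lambda>(x, y). \<gamma> (\<bar>x k - y k\<bar>\<^sup>2)) F G"
  by (simp add: energy_coord_def energy_mean_def)

lemma energy_coordinate_deviation:
  fixes \<gamma> :: "real \<Rightarrow> real" and F G :: "(nat \<Rightarrow> real) measure" and B q t :: real
  assumes F: "prob_space F" "sets F = sets (PiM {..<d} (\<lambda>_. lborel))"
    and G: "prob_space G" "sets G = sets (PiM {..<d} (\<lambda>_. lborel))"
    and \<gamma>: "continuous_on {0..} \<gamma>" "\<And>u. 0 \<le> u \<Longrightarrow> 0 \<le> \<gamma> u \<and> \<gamma> u \<le> B" and "0 < B"
    and "4 \<le> m1" "4 \<le> m2" "0 < q" "q \<le> m1 / 4" "q \<le> m2 / 4" "0 < t" "k < d"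
  defines "P \<equiv> PiM {..<m1 + m2} (\<lambda>i. if i < m1 then F else G)"
    and "\<kappa> \<equiv> \<lambda>(x, y). \<gamma> (\<bar>x k - y k\<bar>\<^sup>2)"
  shows "{z \<in> space P. \<bar>energy_statistic \<kappa> m1 m2 z - energy_mean \<kappa> F G\<bar> > t} \<in> sets P"
    and "measure P {z \<in> space P. \<bar>energy_statistic \<kappa> m1 m2 z - energy_mean \<kappa> F G\<bar> > t}
           \<le> 4 * real (m1 + m2) * exp (- q * t\<^sup>2 / (8 * B\<^sup>2))"
proof -
  have kernel: "two_sample_kernel F G (PiM {..<d} (\<lambda>_. lborel)) \<kappa> B"
    unfolding \<kappa>_def using F G \<gamma> \<open>0 < B\<close> \<open>k < d\<close> by (rule two_sample_kernel_coordinate)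
  show "{z \<in> space P. \<bar>energy_statistic \<kappa> m1 m2 z - energy_mean \<kappa> F G\<bar> > t} \<in> sets P"
    using two_sample_kernel.borel_measurable_energy_statistic[OF kernel, of m1 m2]
    unfolding P_def by measurable
  have "measure P {z \<in> space P. \<bar>energy_statistic \<kappa> m1 m2 z - energy_mean \<kappa> F G\<bar> > 4 * (t / 4)}
      \<le> 4 * real (m1 + m2) * exp (- 2 * q * (t / 4)\<^sup>2 / B\<^sup>2)"
    unfolding P_def using assms
    by (intro two_sample_kernel.energy_statistic_deviation[OF kernel]) auto
  also have "- 2 * q * (t / 4)\<^sup>2 / B\<^sup>2 = - q * t\<^sup>2 / (8 * B\<^sup>2)"
    by (simp add: power2_eq_square)
  finally show "measure P {z \<in> space P. \<bar>energy_statistic \<kappa> m1 m2 z - energy_mean \<kappa> F G\<bar> > t}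
      \<le> 4 * real (m1 + m2) * exp (- q * t\<^sup>2 / (8 * B\<^sup>2))"
    by simp
qed

definition max_ordstat_error ::
  "(real \<Rightarrow> real) \<Rightarrow> (nat \<Rightarrow> real) measure \<Rightarrow> (nat \<Rightarrow> real) measure \<Rightarrow> nat \<Rightarrow> nat \<Rightarrow> nat
    \<Rightarrow> (nat \<Rightarrow> nat \<Rightarrow> real) \<times> (nat \<Rightarrow> nat \<Rightarrow> real) \<Rightarrow> real" where
  "max_ordstat_error \<gamma> F G d m1 m2 \<omega> = (MAX k\<in>{..<d}.
     \<bar>ordstat (energy_hat_coord \<gamma> m1 m2 (fst \<omega>) (snd \<omega>)) d k - ordstat (energy_coord \<gamma> F G) d k\<bar>)"

lemma max_ordstat_error_bound:
  fixes \<gamma> :: "real \<Rightarrow> real" and F G :: "(nat \<Rightarrow> real) measure" and B q t :: real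
  assumes F: "prob_space F" "sets F = sets (PiM {..<d} (\<lambda>_. lborel))"
    and G: "prob_space G" "sets G = sets (PiM {..<d} (\<lambda>_. lborel))"
    and \<gamma>: "continuous_on {0..} \<gamma>" "\<And>u. 0 \<le> u \<Longrightarrow> 0 \<le> \<gamma> u \<and> \<gamma> u \<le> B" and "0 < B"
    and "4 \<le> m1" "4 \<le> m2" "0 < q" "q \<le> m1 / 4" "q \<le> m2 / 4" "0 < t" "0 < d"
  defines "Q \<equiv> PiM {..<m1} (\<lambda>_. F) \<Otimes>\<^sub>M PiM {..<m2} (\<lambda>_. G)"
  shows "measure Q {\<omega> \<in> space Q. max_ordstat_error \<gamma> F G d m1 m2 \<omega> > t}
           \<le> real d * (4 * real (m1 + m2) * exp (- q * t\<^sup>2 / (8 * B\<^sup>2)))"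
proof -
  let ?P = "PiM {..<m1 + m2} (\<lambda>i. if i < m1 then F else G)"
  define E where "E k = {z \<in> space ?P. t < \<bar>energy_statistic (\<lambda>(x, y). \<gamma> (\<bar>x k - y k\<bar>\<^sup>2)) m1 m2 z
      - energy_mean (\<lambda>(x, y). \<gamma> (\<bar>x k - y k\<bar>\<^sup>2)) F G\<bar>}" for k
  note E = energy_coordinate_deviation[OF F G \<gamma> \<open>0 < B\<close> assms(8-13), folded E_def]
  note concat = distr_PiM_concat_samples[OF F(1) G(1), of m1 m2, folded Q_def]
  interpret P: prob_space ?P
    using F G by (intro prob_space_PiM) auto
  interpret Q: prob_space Q
    unfolding Q_def using F G by (intro prob_space_pair prob_space_PiM) auto
  have union_sets: "(\<Union>k<d. E k) \<in> sets ?P"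
    using E(1) by auto
  have "max_ordstat_error \<gamma> F G d m1 m2 \<omega> \<le> t"
    if "\<omega> \<in> space Q" "concat_samples m1 m2 \<omega> \<notin> (\<Union>k<d. E k)" for \<omega>
  proof -
    have "concat_samples m1 m2 \<omega> \<in> space ?P"
      using measurable_space[OF concat(1) that(1)] .
    then have "\<bar>energy_hat_coord \<gamma> m1 m2 (fst \<omega>) (snd \<omega>) k - energy_coord \<gamma> F G k\<bar> \<le> t"
      if "k < d" for k
      using that \<open>concat_samples m1 m2 \<omega> \<notin> (\<Union>k<d. E k)\<close>
      by (auto simp: E_def energy_hat_coord_concat_samples energy_coord_eq_energy_mean not_less)
    then show ?thesis
      unfolding max_ordstat_error_def using \<open>0 < d\<close>
      by (subst Max_le_iff) (auto intro: ordstat_abs_diff_le)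
  qed
  then have "measure Q {\<omega> \<in> space Q. max_ordstat_error \<gamma> F G d m1 m2 \<omega> > t}
      \<le> measure Q (concat_samples m1 m2 -` (\<Union>k<d. E k) \<inter> space Q)"
    by (intro Q.finite_measure_mono measurable_sets[OF concat(1) union_sets]) force
  also have "\<dots> = measure ?P (\<Union>k<d. E k)"
    using measure_distr[OF concat(1) union_sets] by (simp add: concat(2))
  also have "\<dots> \<le> (\<Sum>k<d. measure ?P (E k))"
    using E(1) by (intro P.finite_measure_subadditive_finite) auto
  also have "\<dots> \<le> real d * (4 * real (m1 + m2) * exp (- q * t\<^sup>2 / (8 * B\<^sup>2)))"
    using sum_mono[of "{..<d}", OF E(2)] by simp
  finally show ?thesis .
qed

lemma eventually_balanced_sample_sizes:
  fixes n1 n2 :: "nat \<Rightarrow> nat" and \<pi>1 p :: real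
  assumes sizes: "\<forall>\<^sub>F n in sequentially. n1 n + n2 n = n"
    and ratio: "(\<lambda>n. real (n1 n) / real n) \<longlonglongrightarrow> \<pi>1" and "0 < \<pi>1" "\<pi>1 < 1"
  defines "p \<equiv> min \<pi>1 (1 - \<pi>1) / 8"
  shows "\<forall>\<^sub>F n in sequentially. 4 \<le> n1 n \<and> 4 \<le> n2 n \<and> p * n \<le> n1 n / 4 \<and> p * n \<le> n2 n / 4"
proof -
  have "\<forall>\<^sub>F n in sequentially. \<pi>1 / 2 < real (n1 n) / real n"
    using ratio \<open>0 < \<pi>1\<close> by (intro order_tendstoD(1)) auto
  moreover have "\<forall>\<^sub>F n in sequentially. real (n1 n) / real n < (1 + \<pi>1) / 2"
    using ratio \<open>\<pi>1 < 1\<close> by (intro order_tendstoD(2)) auto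
  moreover have "\<forall>\<^sub>F n in sequentially. 1 / p \<le> real n"
    using filterlim_real_sequentially unfolding filterlim_at_top by blast
  moreover have "\<forall>\<^sub>F n in sequentially. 0 < n"
    by (rule eventually_gt_at_top)
  ultimately show ?thesis
    using sizes
  proof eventually_elim
    case (elim n)
    have p: "0 < p" "p \<le> \<pi>1 / 8" "p \<le> (1 - \<pi>1) / 8"
      using \<open>0 < \<pi>1\<close> \<open>\<pi>1 < 1\<close> by (auto simp: p_def)
    have "real (n1 n) + real (n2 n) = real n"
      using elim(5) by (metis of_nat_add)
    moreover have "\<pi>1 * n < 2 * n1 n" "2 * n1 n < n + \<pi>1 * n"
      using elim(1,2,4) by (simp_all add: field_simps)
    moreover have "8 * (p * n) \<le> \<pi>1 * n" "8 * (p * n) \<le> n - \<pi>1 * n"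
      using p mult_right_mono[of "8 * p" \<pi>1 "real n"] mult_right_mono[of "8 * p" "1 - \<pi>1" "real n"]
      by (simp_all add: algebra_simps)
    moreover have "1 \<le> p * n"
      using elim(3) p by (simp add: field_simps)
    ultimately have "4 \<le> real (n1 n)" "4 \<le> real (n2 n)" "p * n \<le> n1 n / 4" "p * n \<le> n2 n / 4"
      by linarith+
    then show ?case
      by simp
  qed
qed

lemma eventually_ln_le_powr:
  fixes \<beta> g K c :: real
  assumes "\<beta> < g" "0 < g" "0 < c"
  shows "\<forall>\<^sub>F n in sequentially. K * real n powr \<beta> + ln (4 * real n) \<le> c * real n powr g"
proof -
  have "(\<lambda>n::nat. real n powr \<beta>) \<in> o(\<lambda>n. real n powr g)"
    using assms by (intro powr_smallo_iff[THEN iffD2] filterlim_real_sequentially) auto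
  moreover have "(\<lambda>n::nat. ln (4 * real n)) \<in> o(\<lambda>n. real n powr g)"
    using assms by real_asymp
  ultimately have "(\<lambda>n::nat. K * real n powr \<beta> + ln (4 * real n)) \<in> o(\<lambda>n. real n powr g)"
    by (intro sum_in_smallo) auto
  from landau_o.smallD[OF this \<open>0 < c\<close>] show ?thesis
    by eventually_elim auto
qed

lemma union_bound_le_exp:
  fixes n d :: nat and K \<beta> c g :: real
  assumes "0 < n" "0 < d" "ln d \<le> K * n powr \<beta>" "K * n powr \<beta> + ln (4 * n) \<le> c / 2 * n powr g"
    and "0 \<le> c"
  shows "d * (4 * n * exp (- c * n powr g)) \<le> exp (- (c / 2) * (n powr g - n powr \<beta>))"
proof -
  have "d * (4 * n * exp (- c * n powr g)) = exp (ln d + ln (4 * n) - c * n powr g)"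
    using assms by (simp add: exp_add exp_diff exp_minus field_simps)
  also have "\<dots> \<le> exp (- (c / 2) * (n powr g - n powr \<beta>))"
  proof -
    have "- (c / 2) * (n powr g - n powr \<beta>) = c / 2 * n powr \<beta> - c / 2 * n powr g"
      by (simp add: algebra_simps)
    moreover have "0 \<le> c / 2 * n powr \<beta>"
      using \<open>0 \<le> c\<close> by simp
    ultimately show ?thesis
      using assms(3,4) by simp
  qed
  finally show ?thesis .
qed

lemma max_ordstat_error_bigo:
  fixes \<gamma> :: "real \<Rightarrow> real" and d n1 n2 :: "nat \<Rightarrow> nat"
    and F G :: "nat \<Rightarrow> (nat \<Rightarrow> real) measure" and \<pi>1 \<beta> \<alpha> B :: real
  assumes d_pos: "\<And>n. 1 \<le> d n" and log_d: "(\<lambda>n. ln (real (d n))) \<in> O(\<lambda>n. real n powr \<beta>)"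
    and \<alpha>: "0 \<le> \<beta>" "0 < \<alpha>" "\<alpha> < (1 - \<beta>) / 2"
    and sizes: "\<forall>\<^sub>F n in sequentially. n1 n + n2 n = n"
    and ratio: "(\<lambda>n. real (n1 n) / real n) \<longlonglongrightarrow> \<pi>1" and pi1: "0 < \<pi>1" "\<pi>1 < 1"
    and F: "\<And>n. prob_space (F n)" "\<And>n. sets (F n) = sets (PiM {..<d n} (\<lambda>_. lborel))"
    and G: "\<And>n. prob_space (G n)" "\<And>n. sets (G n) = sets (PiM {..<d n} (\<lambda>_. lborel))"
    and \<gamma>: "continuous_on {0..} \<gamma>" "\<And>u. 0 \<le> u \<Longrightarrow> 0 \<le> \<gamma> u \<and> \<gamma> u \<le> B" and "0 < B"
  defines "Q n \<equiv> PiM {..<n1 n} (\<lambda>_. F n) \<Otimes>\<^sub>M PiM {..<n2 n} (\<lambda>_. G n)"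
  shows "(\<lambda>n. measure (Q n)
           {\<omega> \<in> space (Q n). max_ordstat_error \<gamma> (F n) (G n) (d n) (n1 n) (n2 n) \<omega> > n powr - \<alpha>})
         \<in> O(\<lambda>n. exp (- (min \<pi>1 (1 - \<pi>1) / (128 * B\<^sup>2)) * (n powr (1 - 2 * \<alpha>) - n powr \<beta>)))"
proof (rule bigoI[where c = 1], goal_cases)
  case 1
  define p where "p = min \<pi>1 (1 - \<pi>1) / 8"
  define c where "c = p / (8 * B\<^sup>2)"
  have "0 < c"
    using pi1 \<open>0 < B\<close> by (simp add: c_def p_def)
  have b1: "min \<pi>1 (1 - \<pi>1) / (128 * B\<^sup>2) = c / 2"
    by (simp add: c_def p_def)
  obtain K where K: "\<forall>\<^sub>F n in sequentially. \<bar>ln (real (d n))\<bar> \<le> K * real n powr \<beta>"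
    using log_d by (auto elim!: landau_o.bigE)
  have asymptotics: "\<forall>\<^sub>F n in sequentially.
      K * real n powr \<beta> + ln (4 * real n) \<le> c / 2 * real n powr (1 - 2 * \<alpha>)"
    using \<alpha> \<open>0 < c\<close> by (intro eventually_ln_le_powr) auto
  show ?case
    using K eventually_balanced_sample_sizes[OF sizes ratio pi1, folded p_def] asymptotics sizes
      eventually_gt_at_top[of 0]
  proof eventually_elim
    case (elim n)
    have "p * n * (n powr - \<alpha>)\<^sup>2 / (8 * B\<^sup>2) = c * n powr (1 - 2 * \<alpha>)"
      using \<open>0 < n\<close> by (simp add: c_def powr_diff powr_minus power2_eq_square field_simps
          flip: powr_add)
    moreover have "measure (Q n)
        {\<omega> \<in> space (Q n). max_ordstat_error \<gamma> (F n) (G n) (d n) (n1 n) (n2 n) \<omega> > n powr - \<alpha>}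
      \<le> d n * (4 * real (n1 n + n2 n) * exp (- (p * n) * (n powr - \<alpha>)\<^sup>2 / (8 * B\<^sup>2)))"
      unfolding Q_def using elim d_pos[of n] pi1
      by (intro max_ordstat_error_bound[OF F G \<gamma> \<open>0 < B\<close>]) (auto simp: p_def)
    moreover have "d n * (4 * n * exp (- c * n powr (1 - 2 * \<alpha>)))
        \<le> exp (- (c / 2) * (n powr (1 - 2 * \<alpha>) - n powr \<beta>))"
      using elim d_pos[of n] \<open>0 < c\<close> by (intro union_bound_le_exp[where K = K]) auto
    ultimately show ?case
      using elim by (simp add: b1)
  qed
qed

theorem corollary1:
  fixes \<gamma> :: "real \<Rightarrow> real"
    and d n1 n2 :: "nat \<Rightarrow> nat"
    and F G :: "nat \<Rightarrow> (nat \<Rightarrow> real) measure"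
    and \<pi>1 \<beta> :: real
  assumes d_pos: "\<And>n. d n \<ge> 1"
    and log_d: "(\<lambda>n. ln (real (d n))) \<in> O(\<lambda>n. real n powr \<beta>)"
    and beta: "0 \<le> \<beta>" "\<beta> < 1"
    and sizes: "\<forall>\<^sub>F n in sequentially. n1 n + n2 n = n \<and> 2 \<le> n1 n \<and> 2 \<le> n2 n"
    and ratio: "(\<lambda>n. real (n1 n) / real n) \<longlonglongrightarrow> \<pi>1"
    and pi1: "0 < \<pi>1" "\<pi>1 < 1"
    and F_prob: "\<And>n. prob_space (F n)"
    and F_sets: "\<And>n. sets (F n) = sets (PiM {..<d n} (\<lambda>_. lborel))"
    and F_ac: "\<And>n. absolutely_continuous (PiM {..<d n} (\<lambda>_. lborel)) (F n)"
    and G_prob: "\<And>n. prob_space (G n)"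
    and G_sets: "\<And>n. sets (G n) = sets (PiM {..<d n} (\<lambda>_. lborel))"
    and G_ac: "\<And>n. absolutely_continuous (PiM {..<d n} (\<lambda>_. lborel)) (G n)"
    and gamma_cont: "continuous_on {0..} \<gamma>"
    and gamma_mono: "mono_on {0..} \<gamma>"
    and gamma_nonneg: "\<And>t. 0 \<le> t \<Longrightarrow> 0 \<le> \<gamma> t"
    and gamma0: "\<gamma> 0 = 0"
    and gamma_deriv: "\<exists>g. (\<forall>t>0. (\<gamma> has_real_derivative g t) (at t))
                          \<and> completely_monotone_on_pos g
                          \<and> (\<exists>s>0. \<exists>t>0. g s \<noteq> g t)"
    and gamma_bounded: "bounded (\<gamma> ` {0..})"
  shows "\<exists>b1>0. \<forall>\<alpha>. 0 < \<alpha> \<and> \<alpha> < (1 - \<beta>) / 2 \<longrightarrow>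
    (\<lambda>n. measure (PiM {..<n1 n} (\<lambda>_. F n) \<Otimes>\<^sub>M PiM {..<n2 n} (\<lambda>_. G n))
        {\<omega> \<in> space (PiM {..<n1 n} (\<lambda>_. F n) \<Otimes>\<^sub>M PiM {..<n2 n} (\<lambda>_. G n)).
          (MAX k\<in>{..<d n}.
             \<bar>ordstat (energy_hat_coord \<gamma> (n1 n) (n2 n) (fst \<omega>) (snd \<omega>)) (d n) k
              - ordstat (energy_coord \<gamma> (F n) (G n)) (d n) k\<bar>) > real n powr (- \<alpha>)})
    \<in> O(\<lambda>n. exp (- b1 * (real n powr (1 - 2 * \<alpha>) - real n powr \<beta>)))"
proof -
  obtain B where B: "0 < B" "\<And>u. 0 \<le> u \<Longrightarrow> 0 \<le> \<gamma> u \<and> \<gamma> u \<le> B"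
  proof -
    obtain C where "\<forall>x\<in>\<gamma> ` {0..}. norm x \<le> C"
      using gamma_bounded by (auto simp: bounded_iff)
    then show thesis
      using gamma_nonneg by (intro that[of "max 1 C"]) force+
  qed
  have "\<forall>\<^sub>F n in sequentially. n1 n + n2 n = n"
    using sizes by (rule eventually_mono) simp
  note bigo = max_ordstat_error_bigo[OF d_pos log_d beta(1) _ _ this ratio pi1
      F_prob F_sets G_prob G_sets gamma_cont B(2) B(1)]
  show ?thesis
    unfolding max_ordstat_error_def[symmetric]
    using pi1 B(1) by (intro exI[of _ "min \<pi>1 (1 - \<pi>1) / (128 * B\<^sup>2)"] conjI allI impI bigo) auto
qed

end
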